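(* Let $\mathcal F$ be an upper Furstenberg family, written as in the definition of upper family, which satisfies the invariance property: if $F\in\mathcal F_{\delta,m}$ and $k\in\mathbb N$ then $F+k\in\mathcal F_{\delta,m}$. Then $A\in\mathcal F$ if and only if there are $\delta\in D$, numbers $k_m\in\mathbb N$ and finite sets $R_m\in\mathcal F_{\delta,m}$ ($m\in M$) such that $k_m+R_m\subseteq A$ for every $m\in M$.
   Context: $\mathbb N$ denotes the nonnegative integers. A Furstenberg family is hereditarily upward ($A\in\mathcal F$, $A\subseteq B$ imply $B\in\mathcal F$). A Furstenberg family $\mathcal F$ is upper if $\emptyset\notin\mathcal F$ and $\mathcal F=\bigcup_{\delta\in D}\mathcal F_\delta$ with $\mathcal F_\delta=\bigcap_{m\in M}\mathcal F_{\delta,m}$, where $D$ is an arbitrary index set, $M$ is countable, each $\mathcal F_{\delta,m}$ is finitely hereditarily upward (for each $A\in\mathcal F_{\delta,m}$ there is a finite set $F$ such that every $B$ with $F\cap A\subseteq B$ belongs to $\mathcal F_{\delta,m}$), and $\mathcal F$ is uniformly left invariant (for every $A\in\mathcal F$ there is $\delta\in D$ with $A-n:=\{k\in\mathbb N:k+n\in A\}\in\mathcal F_\delta$ for all $n\in\mathbb N$). *)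

theory Defs
  imports Main "HOL-Library.Countable_Set"
begin

definition hereditarily_upward :: "nat set set \<Rightarrow> bool" where
  "hereditarily_upward \<F> \<longleftrightarrow> (\<forall>A B. A \<in> \<F> \<longrightarrow> A \<subseteq> B \<longrightarrow> B \<in> \<F>)"

definition finitely_hereditarily_upward :: "nat set set \<Rightarrow> bool" where
  "finitely_hereditarily_upward \<F> \<longleftrightarrow>
     (\<forall>A \<in> \<F>. \<exists>G. finite G \<and> (\<forall>B. G \<inter> A \<subseteq> B \<longrightarrow> B \<in> \<F>))"

definition shift_left :: "nat set \<Rightarrow> nat \<Rightarrow> nat set" where
  "shift_left A n = {k. k + n \<in> A}"

definition fam_delta :: "'m set \<Rightarrow> ('d \<Rightarrow> 'm \<Rightarrow> nat set set) \<Rightarrow> 'd \<Rightarrow> nat set set" where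
  "fam_delta M Fam \<delta> = (\<Inter>m\<in>M. Fam \<delta> m)"

definition uniformly_left_invariant ::
  "nat set set \<Rightarrow> 'd set \<Rightarrow> 'm set \<Rightarrow> ('d \<Rightarrow> 'm \<Rightarrow> nat set set) \<Rightarrow> bool" where
  "uniformly_left_invariant \<F> D M Fam \<longleftrightarrow>
     (\<forall>A \<in> \<F>. \<exists>\<delta> \<in> D. \<forall>n. shift_left A n \<in> fam_delta M Fam \<delta>)"

definition upper_family_repr ::
  "nat set set \<Rightarrow> 'd set \<Rightarrow> 'm set \<Rightarrow> ('d \<Rightarrow> 'm \<Rightarrow> nat set set) \<Rightarrow> bool" where
  "upper_family_repr \<F> D M Fam \<longleftrightarrow>
     hereditarily_upward \<F> \<and>
     {} \<notin> \<F> \<and>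
     countable M \<and>
     (\<forall>\<delta> \<in> D. \<forall>m \<in> M. finitely_hereditarily_upward (Fam \<delta> m)) \<and>
     \<F> = (\<Union>\<delta> \<in> D. fam_delta M Fam \<delta>) \<and>
     uniformly_left_invariant \<F> D M Fam"

end

theory Submission
  imports Defs
begin

text \<open>Forward direction: each \<open>Fam \<delta> m\<close> is generated by finite subsets of its members,
  so \<open>A\<close> contains finite witnesses \<open>R m\<close> (with \<open>k m = 0\<close>). Backward direction: shift invariance
  puts \<open>k m + R m\<close> into \<open>Fam \<delta> m\<close>, and upward closure then puts \<open>A\<close> there for every \<open>m\<close>.\<close>

lemma hereditarily_upwardD: "hereditarily_upward \<G> \<Longrightarrow> X \<in> \<G> \<Longrightarrow> X \<subseteq> B \<Longrightarrow> B \<in> \<G>"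
  unfolding hereditarily_upward_def by blast

lemma finitely_hereditarily_upward_imp_hereditarily_upward:
  assumes "finitely_hereditarily_upward \<G>"
  shows "hereditarily_upward \<G>"
  unfolding hereditarily_upward_def
proof (intro allI impI)
  fix X B assume "X \<in> \<G>" "X \<subseteq> B"
  obtain G where G: "\<forall>B. G \<inter> X \<subseteq> B \<longrightarrow> B \<in> \<G>"
    using assms \<open>X \<in> \<G>\<close> unfolding finitely_hereditarily_upward_def by blast
  have "G \<inter> X \<subseteq> B"
    using \<open>X \<subseteq> B\<close> by blast
  with G show "B \<in> \<G>"
    by simp
qed

lemma finitely_hereditarily_upward_finite_subset:
  assumes "finitely_hereditarily_upward \<G>" and "A \<in> \<G>"
  shows "\<exists>R. finite R \<and> R \<subseteq> A \<and> R \<in> \<G>"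
proof -
  obtain G where "finite G" and G: "\<forall>B. G \<inter> A \<subseteq> B \<longrightarrow> B \<in> \<G>"
    using bspec[OF assms(1)[unfolded finitely_hereditarily_upward_def] assms(2)] by (elim exE conjE)
  then show ?thesis
    using G[rule_format, OF order_refl] by (intro exI[of _ "G \<inter> A"]) simp
qed

lemma upper_family_repr_mem_iff:
  "upper_family_repr \<F> D M Fam \<Longrightarrow> A \<in> \<F> \<longleftrightarrow> (\<exists>\<delta>\<in>D. \<forall>m\<in>M. A \<in> Fam \<delta> m)"
  unfolding upper_family_repr_def fam_delta_def by auto

lemma shift_invariant_upward_memI:
  assumes "hereditarily_upward \<G>" and "\<forall>X\<in>\<G>. \<forall>k. (+) k ` X \<in> \<G>"
    and "R \<in> \<G>" and "(+) k ` R \<subseteq> A"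
  shows "A \<in> \<G>"
proof -
  have "(+) k ` R \<in> \<G>"
    using assms(2,3) by simp
  from assms(1) this assms(4) show ?thesis
    by (rule hereditarily_upwardD)
qed

lemma all_mem_iff_shifted_finite_witnesses:
  fixes \<G> :: "'m \<Rightarrow> nat set set"
  assumes fhu: "\<forall>m\<in>M. finitely_hereditarily_upward (\<G> m)"
    and inv: "\<forall>m\<in>M. \<forall>X\<in>\<G> m. \<forall>k. (+) k ` X \<in> \<G> m"
  shows "(\<forall>m\<in>M. A \<in> \<G> m) \<longleftrightarrow>
    (\<exists>k R. \<forall>m\<in>M. finite (R m) \<and> R m \<in> \<G> m \<and> (+) (k m) ` R m \<subseteq> A)"
proof
  assume A: "\<forall>m\<in>M. A \<in> \<G> m"
  have "\<forall>m\<in>M. \<exists>R. finite R \<and> R \<subseteq> A \<and> R \<in> \<G> m"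
  proof
    fix m assume m: "m \<in> M"
    show "\<exists>R. finite R \<and> R \<subseteq> A \<and> R \<in> \<G> m"
      using fhu[rule_format, OF m] A[rule_format, OF m]
      by (rule finitely_hereditarily_upward_finite_subset)
  qed
  from bchoice[OF this] obtain R where "\<forall>m\<in>M. finite (R m) \<and> R m \<subseteq> A \<and> R m \<in> \<G> m"
    by (elim exE)
  then show "\<exists>k R. \<forall>m\<in>M. finite (R m) \<and> R m \<in> \<G> m \<and> (+) (k m) ` R m \<subseteq> A"
    by (intro exI[of _ "\<lambda>_. 0"] exI[of _ R]) simp
next
  assume "\<exists>k R. \<forall>m\<in>M. finite (R m) \<and> R m \<in> \<G> m \<and> (+) (k m) ` R m \<subseteq> A"
  then obtain k R where kR: "\<forall>m\<in>M. R m \<in> \<G> m \<and> (+) (k m) ` R m \<subseteq> A"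
    by blast
  show "\<forall>m\<in>M. A \<in> \<G> m"
  proof
    fix m assume m: "m \<in> M"
    have "hereditarily_upward (\<G> m)"
      using fhu[rule_format, OF m] by (rule finitely_hereditarily_upward_imp_hereditarily_upward)
    moreover have "R m \<in> \<G> m" and "(+) (k m) ` R m \<subseteq> A"
      using kR m by simp_all
    ultimately show "A \<in> \<G> m"
      using bspec[OF inv m] by (blast intro: shift_invariant_upward_memI)
  qed
qed

theorem mainTheorem7:
  fixes \<F> :: "nat set set" and D :: "'d set" and M :: "'m set"
    and Fam :: "'d \<Rightarrow> 'm \<Rightarrow> nat set set" and A :: "nat set"
  assumes upper: "upper_family_repr \<F> D M Fam"
    and inv: "\<forall>\<delta> \<in> D. \<forall>m \<in> M. \<forall>G \<in> Fam \<delta> m. \<forall>k::nat. ((+) k) ` G \<in> Fam \<delta> m"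
  shows "A \<in> \<F> \<longleftrightarrow>
    (\<exists>\<delta> \<in> D. \<exists>k :: 'm \<Rightarrow> nat. \<exists>R :: 'm \<Rightarrow> nat set.
       \<forall>m \<in> M. finite (R m) \<and> R m \<in> Fam \<delta> m \<and> ((+) (k m)) ` (R m) \<subseteq> A)"
proof -
  have "(\<forall>m\<in>M. A \<in> Fam \<delta> m) \<longleftrightarrow>
      (\<exists>k R. \<forall>m\<in>M. finite (R m) \<and> R m \<in> Fam \<delta> m \<and> (+) (k m) ` R m \<subseteq> A)"
    if "\<delta> \<in> D" for \<delta>
  proof (rule all_mem_iff_shifted_finite_witnesses)
    show "\<forall>m\<in>M. finitely_hereditarily_upward (Fam \<delta> m)"
      using upper that by (simp add: upper_family_repr_def)
    show "\<forall>m\<in>M. \<forall>X\<in>Fam \<delta> m. \<forall>k. (+) k ` X \<in> Fam \<delta> m"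
      using inv that by simp
  qed
  then show ?thesis
    unfolding upper_family_repr_mem_iff[OF upper] by (rule bex_cong[OF refl])
qed

end
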